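(* Let $\alpha\in(0,\pi/4]$ and let $\mu_\alpha=\cos\alpha\,\mathcal H^1|_{T^\alpha}+\mathcal H^1|_{\Gamma_\alpha\setminus T^\alpha}$. Then $$\int\int_0^\infty\Delta^1_{\mu_\alpha}(x,r)^2\,\frac{dr}{r}\,d\mu_\alpha(x)\lesssim\sin^4\alpha,$$ with an absolute implicit constant.
   Context: $f_\alpha:\mathbb{R}\to\mathbb{R}$ is defined by $f_\alpha(x)=0$ for $x\in(-\infty,-1/2]\cup[1/2,\infty)$, $f_\alpha(x)=\tan\alpha\,(x+1/2)$ for $x\in(-1/2,0]$, and $f_\alpha(x)=-\tan\alpha\,(x-1/2)$ for $x\in(0,1/2)$. $\Gamma_\alpha\subset\mathbb{R}^2$ is the graph of $f_\alpha$, and $T^\alpha=\{(x,f_\alpha(x)):x\in[-1/2,1/2]\}$. $\mathcal H^1$ is one-dimensional Hausdorff measure. $\Delta^1_\mu(x,r)=\frac{\mu(B(x,r))}{r}-\frac{\mu(B(x,2r))}{2r}$ with $B(x,r)$ the open ball. *)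

theory Defs
  imports "HOL-Analysis.Analysis"
begin

definition f_alpha :: "real \<Rightarrow> real \<Rightarrow> real" where
  "f_alpha \<alpha> x =
     (if x \<le> -1/2 \<or> x \<ge> 1/2 then 0
      else if x \<le> 0 then tan \<alpha> * (x + 1/2)
      else - tan \<alpha> * (x - 1/2))"

definition Gamma_alpha :: "real \<Rightarrow> (real \<times> real) set" where
  "Gamma_alpha \<alpha> = {(x, f_alpha \<alpha> x) | x. True}"

definition T_alpha :: "real \<Rightarrow> (real \<times> real) set" where
  "T_alpha \<alpha> = {(x, f_alpha \<alpha> x) | x. x \<in> {-1/2..1/2}}"

definition H1_delta :: "real \<Rightarrow> (real \<times> real) set \<Rightarrow> ennreal" where
  "H1_delta \<delta> A = (INF U \<in> {U :: nat \<Rightarrow> (real \<times> real) set.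
        A \<subseteq> (\<Union>i. U i) \<and> (\<forall>i. diameter (U i) \<le> \<delta>)}.
        (\<Sum>i. ennreal (diameter (U i))))"

definition H1 :: "(real \<times> real) set \<Rightarrow> ennreal" where
  "H1 A = (SUP \<delta> \<in> {0<..}. H1_delta \<delta> A)"

definition mu_alpha :: "real \<Rightarrow> (real \<times> real) measure" where
  "mu_alpha \<alpha> = measure_of UNIV (sets borel)
     (\<lambda>A. ennreal (cos \<alpha>) * H1 (A \<inter> T_alpha \<alpha>) + H1 (A \<inter> (Gamma_alpha \<alpha> - T_alpha \<alpha>)))"

definition Delta1 :: "(real \<times> real) measure \<Rightarrow> real \<times> real \<Rightarrow> real \<Rightarrow> real" where
  "Delta1 \<mu> x r = measure \<mu> (ball x r) / r - measure \<mu> (ball x (2*r)) / (2*r)"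

end

theory Submission
  imports Defs "HOL-Real_Asymp.Real_Asymp"
begin

(* The projection to the first coordinate pushes mu_alpha forward to kappa times
   Lebesgue measure, kappa being the H1-length of a unit segment: the weight cos alpha exactly
   compensates the stretching 1 / cos alpha of arc length on the slanted sides.  For x = (s, f s)
   on the graph, mu_alpha (B(x, r)) is therefore kappa times the length of the shadow
   {t. (t, f t) \<in> B(x, r)}.  If f is affine on (s - 2r, s + 2r), the shadows of B(x, r) and
   B(x, 2r) are intervals of lengths proportional to r and Delta vanishes; this fails only for s
   within 2r of one of the three kinks, a set of measure at most 12 r.  There the normalised
   shadow lengths lie between 2 cos alpha and 2, and for r \<ge> 1 above 2 - sin^2 alpha / r^2,
   so Delta^2 \<le> 4 sin^4 alpha min(1, r^-4), and integrating against dr/r ds gives the bound. *)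

section \<open>Hausdorff measure of segments\<close>

lemma H1_delta_le_cover:
  assumes "A \<subseteq> (\<Union>i. U i)" "\<And>i. diameter (U i) \<le> \<delta>"
  shows "H1_delta \<delta> A \<le> (\<Sum>i. ennreal (diameter (U i)))"
  unfolding H1_delta_def by (rule INF_lower) (use assms in auto)

lemma H1_leI:
  assumes "\<And>\<delta>. \<delta> > 0 \<Longrightarrow> H1_delta \<delta> A \<le> c"
  shows "H1 A \<le> c"
  unfolding H1_def by (rule SUP_least) (use assms in auto)

lemma H1_delta_mono: "A \<subseteq> B \<Longrightarrow> H1_delta \<delta> A \<le> H1_delta \<delta> B"
  unfolding H1_delta_def by (rule INF_superset_mono) auto

lemma H1_mono: "A \<subseteq> B \<Longrightarrow> H1 A \<le> H1 B"
  unfolding H1_def by (rule SUP_mono) (use H1_delta_mono in blast)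

lemma H1_subset_singleton:
  assumes "A \<subseteq> {p}"
  shows "H1 A = 0"
proof -
  have "H1 {p} \<le> 0"
  proof (rule H1_leI)
    fix \<delta> :: real assume "\<delta> > 0"
    then have "H1_delta \<delta> {p} \<le> (\<Sum>i::nat. ennreal (diameter {p}))"
      by (intro H1_delta_le_cover) auto
    then show "H1_delta \<delta> {p} \<le> 0" by simp
  qed
  then show ?thesis using H1_mono[OF assms] by simp
qed

lemma H1_empty [simp]: "H1 {} = 0"
  by (rule H1_subset_singleton) simp

lemma diameter_isometric_image:
  fixes f :: "'a::metric_space \<Rightarrow> 'b::metric_space"
  assumes "\<And>x y. dist (f x) (f y) = dist x y"
  shows "diameter (f ` U) = diameter U"
proof -
  have "(\<lambda>(x,y). dist x y) ` (f ` U \<times> f ` U) = (\<lambda>(x,y). dist x y) ` (U \<times> U)"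
    using assms by (auto simp: image_iff) (metis case_prod_conv mem_Sigma_iff)+
  then show ?thesis unfolding diameter_def by (simp add: image_image)
qed

lemma H1_isometric_image_le:
  assumes "\<And>x y. dist (f x) (f y) = dist x y"
  shows "H1 (f ` A) \<le> H1 A"
proof -
  have "H1_delta \<delta> (f ` A) \<le> H1_delta \<delta> A" for \<delta>
    unfolding H1_delta_def[of _ A]
  proof (rule INF_greatest)
    fix U :: "nat \<Rightarrow> (real \<times> real) set"
    assume "U \<in> {U. A \<subseteq> (\<Union>i. U i) \<and> (\<forall>i. diameter (U i) \<le> \<delta>)}"
    then have "f ` A \<subseteq> (\<Union>i. f ` U i)" "\<And>i. diameter (f ` U i) \<le> \<delta>"
      using diameter_isometric_image[OF assms] by (auto simp flip: image_UN intro: image_mono)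
    then have "H1_delta \<delta> (f ` A) \<le> (\<Sum>i. ennreal (diameter (f ` U i)))"
      by (rule H1_delta_le_cover)
    then show "H1_delta \<delta> (f ` A) \<le> (\<Sum>i. ennreal (diameter (U i)))"
      using diameter_isometric_image[OF assms] by simp
  qed
  then show ?thesis unfolding H1_def by (rule SUP_mono')
qed

lemma H1_isometric_image:
  assumes "\<And>x y. dist (f x) (f y) = dist x y" "\<And>x y. dist (g x) (g y) = dist x y"
    and "\<And>x. g (f x) = x"
  shows "H1 (f ` A) = H1 A"
proof (rule antisym)
  show "H1 (f ` A) \<le> H1 A" by (rule H1_isometric_image_le[OF assms(1)])
  have "g ` f ` A = A" using assms(3) by (simp add: image_image)
  then show "H1 A \<le> H1 (f ` A)" using H1_isometric_image_le[OF assms(2), of "f ` A"] by simp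
qed

lemma H1_translation: "H1 ((\<lambda>p. p + v) ` A) = H1 A"
  by (rule H1_isometric_image[where g = "\<lambda>p. p - v"]) (auto simp: dist_norm)

definition rot :: "real \<Rightarrow> real \<times> real \<Rightarrow> real \<times> real" where
  "rot \<beta> p = (fst p * cos \<beta> - snd p * sin \<beta>, fst p * sin \<beta> + snd p * cos \<beta>)"

lemma dist_rot: "dist (rot \<beta> p) (rot \<beta> q) = dist p q"
proof -
  have rot_sq: "(x * c - y * s)\<^sup>2 + (x * s + y * c)\<^sup>2 = (x\<^sup>2 + y\<^sup>2) * (s\<^sup>2 + c\<^sup>2)" for x y s c :: real
    by (simp add: power2_eq_square algebra_simps)
  obtain a b a' b' where pq: "p = (a, b)" "q = (a', b')" by (cases p, cases q)
  have "a * cos \<beta> - b * sin \<beta> - (a' * cos \<beta> - b' * sin \<beta>) = (a - a') * cos \<beta> - (b - b') * sin \<beta>"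
    "a * sin \<beta> + b * cos \<beta> - (a' * sin \<beta> + b' * cos \<beta>) = (a - a') * sin \<beta> + (b - b') * cos \<beta>"
    by (simp_all add: algebra_simps)
  then show ?thesis
    unfolding pq rot_def dist_Pair_Pair dist_real_def
    by (simp only: fst_conv snd_conv power2_abs rot_sq sin_cos_squared_add mult_1_right)
qed

lemma rot_minus_rot: "rot (- \<beta>) (rot \<beta> p) = p"
proof -
  have "a * (cos \<beta>)\<^sup>2 + a * (sin \<beta>)\<^sup>2 = a" for a
    by (metis distrib_left mult_1_right sin_cos_squared_add2)
  then show ?thesis by (cases p) (simp add: rot_def power2_eq_square algebra_simps)
qed

lemma H1_rotation: "H1 (rot \<beta> ` A) = H1 A"
  by (rule H1_isometric_image[where g = "rot (- \<beta>)"]) (auto simp: dist_rot rot_minus_rot)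

definition seg :: "real \<Rightarrow> real \<Rightarrow> (real \<times> real) set" where
  "seg a b = {p. snd p = 0 \<and> a < fst p \<and> fst p < b}"

lemma seg_borel [measurable]: "seg a b \<in> sets borel"
proof -
  have eq: "seg a b = {p. snd p = 0} \<inter> {p. a < fst p} \<inter> {p. fst p < b}"
    unfolding seg_def by auto
  have "closed {p :: real \<times> real. snd p = 0}"
    by (intro closed_Collect_eq continuous_intros)
  moreover have "open {p :: real \<times> real. a < fst p}" "open {p :: real \<times> real. fst p < b}"
    by (intro open_Collect_less continuous_intros)+
  ultimately show ?thesis unfolding eq by measurable
qed

lemma H1_seg_le:
  assumes "a < b"
  shows "H1 (seg a b) \<le> ennreal (b - a)"
proof (rule H1_leI)
  fix \<delta> :: real assume "\<delta> > 0"
  obtain n :: nat where n: "(b - a) / \<delta> < n" using reals_Archimedean2 by blast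
  then have npos: "n > 0" using assms \<open>\<delta> > 0\<close>
    by (metis divide_pos_pos diff_gt_0_iff_gt gr0I of_nat_0 order_less_asym)
  define d where "d = (b - a) / n"
  have dpos: "d > 0" using npos assms by (simp add: d_def)
  have "d \<le> \<delta>" using n \<open>\<delta> > 0\<close> npos unfolding d_def by (simp add: field_simps)
  define U where "U i = (if i < n then {p :: real \<times> real. snd p = 0 \<and> a + real i * d \<le> fst p \<and> fst p \<le> a + (real i + 1) * d} else {})" for i
  have diam: "diameter (U i) \<le> d" for i
  proof (rule diameter_le)
    fix x y assume "x \<in> U i" "y \<in> U i"
    then show "norm (x - y) \<le> d"
      by (cases x; cases y) (auto simp: U_def norm_Pair algebra_simps split: if_splits)
  qed (use dpos in simp)
  have "seg a b \<subseteq> (\<Union>i. U i)"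
  proof
    fix p assume p: "p \<in> seg a b"
    define i where "i = nat \<lfloor>(fst p - a) / d\<rfloor>"
    have q0: "0 \<le> (fst p - a) / d" using p dpos by (simp add: seg_def)
    then have fl: "real i \<le> (fst p - a) / d" "(fst p - a) / d < real i + 1"
      unfolding i_def by linarith+
    have "(fst p - a) / d < n" using p dpos npos unfolding seg_def d_def by (simp add: field_simps)
    then have "i < n" using fl unfolding i_def by linarith
    moreover have "a + real i * d \<le> fst p" "fst p \<le> a + (real i + 1) * d"
      using fl dpos by (simp_all add: field_simps)
    ultimately have "p \<in> U i" using p by (simp add: U_def seg_def)
    then show "p \<in> (\<Union>i. U i)" by blast
  qed
  then have "H1_delta \<delta> (seg a b) \<le> (\<Sum>i. ennreal (diameter (U i)))"
    by (rule H1_delta_le_cover) (use diam \<open>d \<le> \<delta>\<close> in \<open>meson order_trans\<close>)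
  also have "\<dots> = (\<Sum>i<n. ennreal (diameter (U i)))"
    by (rule suminf_finite) (auto simp: U_def)
  also have "\<dots> \<le> (\<Sum>i<n. ennreal d)"
    by (intro sum_mono ennreal_leI diam)
  also have "\<dots> = ennreal (real n * d)"
    by (simp add: ennreal_of_nat_eq_real_of_nat ennreal_mult'' dpos less_imp_le)
  also have "\<dots> = ennreal (b - a)" using npos by (simp add: d_def)
  finally show "H1_delta \<delta> (seg a b) \<le> ennreal (b - a)" .
qed

lemma seg_translation: "(\<lambda>p. p + (c, 0)) ` seg a b = seg (a + c) (b + c)"
proof -
  have "p \<in> (\<lambda>p. p + (c, 0)) ` seg a b" if "p \<in> seg (a + c) (b + c)" for p
    using that by (intro image_eqI[where x = "p - (c, 0)"]) (auto simp: seg_def)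
  then show ?thesis by (auto simp: seg_def)
qed

lemma H1_seg_shift: "H1 (seg a b) = H1 (seg 0 (b - a))"
  using H1_translation[of "(-a, 0)" "seg a b"] seg_translation[of "-a" a b] by simp

lemma rot_translate_seg_eq_affine_graph:
  assumes "cos \<beta> > 0"
  shows "(\<lambda>p. p + (c, y0)) ` rot \<beta> ` seg 0 ((d - c) / cos \<beta>)
       = {p. c < fst p \<and> fst p < d \<and> snd p = y0 + tan \<beta> * (fst p - c)}"
proof (intro equalityI subsetI)
  fix p assume "p \<in> (\<lambda>p. p + (c, y0)) ` rot \<beta> ` seg 0 ((d - c) / cos \<beta>)"
  then obtain u where u: "0 < u" "u < (d - c) / cos \<beta>" and p: "p = rot \<beta> (u, 0) + (c, y0)"
    by (auto simp: seg_def)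
  have "u * cos \<beta> < d - c" using u assms by (simp add: field_simps)
  then show "p \<in> {p. c < fst p \<and> fst p < d \<and> snd p = y0 + tan \<beta> * (fst p - c)}"
    using u assms unfolding p by (simp add: rot_def tan_def field_simps)
next
  fix p assume "p \<in> {p. c < fst p \<and> fst p < d \<and> snd p = y0 + tan \<beta> * (fst p - c)}"
  then have p: "c < fst p" "fst p < d" "snd p = y0 + tan \<beta> * (fst p - c)" by auto
  define u where "u = (fst p - c) / cos \<beta>"
  have "(u, 0) \<in> seg 0 ((d - c) / cos \<beta>)"
    using p assms by (auto simp: u_def seg_def divide_strict_right_mono)
  moreover have "p = rot \<beta> (u, 0) + (c, y0)"
    using assms p(3) by (cases p) (simp add: rot_def u_def tan_def field_simps)
  ultimately show "p \<in> (\<lambda>p. p + (c, y0)) ` rot \<beta> ` seg 0 ((d - c) / cos \<beta>)" by blast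
qed

lemma additive_mult_of_nat:
  fixes g :: "real \<Rightarrow> real"
  assumes add: "\<And>x y. x > 0 \<Longrightarrow> y > 0 \<Longrightarrow> g (x + y) = g x + g y"
    and "n \<ge> 1" "y > 0"
  shows "g (real n * y) = real n * g y"
  using \<open>n \<ge> 1\<close>
proof (induction n rule: dec_induct)
  case (step n)
  have "g (real (Suc n) * y) = g (real n * y) + g y"
    using add[of "real n * y" y] step \<open>y > 0\<close> by (simp add: algebra_simps)
  then show ?case using step by (simp add: algebra_simps)
qed simp

lemma nonneg_additive_approx_linear:
  fixes g :: "real \<Rightarrow> real"
  assumes nonneg: "\<And>x. x > 0 \<Longrightarrow> g x \<ge> 0"
    and add: "\<And>x y. x > 0 \<Longrightarrow> y > 0 \<Longrightarrow> g (x + y) = g x + g y"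
    and x: "x > 0" and n: "n \<ge> 1"
  shows "\<bar>g x - g 1 * x\<bar> \<le> g 1 / real n"
proof -
  have mono: "g y \<le> g z" if "0 < y" "y \<le> z" for y z
  proof (cases "y = z")
    case False
    then have "g z = g y + g (z - y)" using add[of y "z - y"] that by simp
    then show ?thesis using nonneg[of "z - y"] that False by simp
  qed simp
  have mult: "g (real k * y) = real k * g y" if "k \<ge> 1" "y > 0" for k y
    using that by (intro additive_mult_of_nat) (use add in auto)
  define m where "m = nat \<lfloor>real n * x\<rfloor>"
  have m: "real m \<le> real n * x" "real n * x < real m + 1"
    using x n unfolding m_def by simp_all
  have "real n * g x = g (real n * x)" using mult[OF n x] by simp
  also have "\<dots> \<le> g (real (m + 1) * 1)" using m x n by (intro mono) simp_all
  also have "\<dots> = real (m + 1) * g 1" by (rule mult) simp_all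
  finally have upper: "real n * g x \<le> (real m + 1) * g 1" by (simp add: add.commute)
  have lower: "real m * g 1 \<le> real n * g x"
  proof (cases "m = 0")
    case False
    have "real m * g 1 = g (real m * 1)" using mult[of m 1] False by simp
    also have "\<dots> \<le> g (real n * x)" using m False by (intro mono) simp_all
    also have "\<dots> = real n * g x" using mult[OF n x] .
    finally show ?thesis .
  qed (use nonneg[OF x] in simp)
  have "real m * g 1 \<le> real n * x * g 1" "real n * x * g 1 \<le> (real m + 1) * g 1"
    using m nonneg[of 1] by (simp_all add: mult_right_mono)
  then have "\<bar>real n * g x - real n * (g 1 * x)\<bar> \<le> g 1"
    using upper lower by (simp add: abs_le_iff algebra_simps)
  then have "real n * \<bar>g x - g 1 * x\<bar> \<le> g 1"
    by (simp only: abs_mult abs_of_nat right_diff_distrib[symmetric])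
  then show ?thesis using n by (simp add: field_simps)
qed

lemma nonneg_additive_imp_linear:
  fixes g :: "real \<Rightarrow> real"
  assumes nonneg: "\<And>x. x > 0 \<Longrightarrow> g x \<ge> 0"
    and add: "\<And>x y. x > 0 \<Longrightarrow> y > 0 \<Longrightarrow> g (x + y) = g x + g y"
    and x: "x > 0"
  shows "g x = g 1 * x"
proof (rule ccontr)
  assume "g x \<noteq> g 1 * x"
  then have e: "\<bar>g x - g 1 * x\<bar> > 0" by simp
  obtain n :: nat where n: "g 1 / \<bar>g x - g 1 * x\<bar> < n" using reals_Archimedean2 by blast
  moreover have "0 \<le> g 1 / \<bar>g x - g 1 * x\<bar>" using e nonneg[of 1] by simp
  ultimately have "n \<ge> 1" by (cases n) auto
  then have "\<bar>g x - g 1 * x\<bar> * real n \<le> g 1"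
    using nonneg_additive_approx_linear[OF nonneg add x] by (simp add: field_simps)
  then show False using n e by (simp add: field_simps)
qed

section \<open>The tent function\<close>

lemma f_alpha_eq: "f_alpha \<alpha> t = tan \<alpha> * max 0 (1/2 - \<bar>t\<bar>)"
  unfolding f_alpha_def by (auto simp: max_def algebra_simps)

lemma f_alpha_outside: "t \<le> -1/2 \<or> 1/2 \<le> t \<Longrightarrow> f_alpha \<alpha> t = 0"
  by (auto simp: f_alpha_eq)

lemma f_alpha_left:
  "-1/2 \<le> t \<Longrightarrow> t \<le> 0 \<Longrightarrow> -1/2 \<le> u \<Longrightarrow> u \<le> 0 \<Longrightarrow> f_alpha \<alpha> t = f_alpha \<alpha> u + tan \<alpha> * (t - u)"
  by (simp add: f_alpha_eq max_def algebra_simps)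

lemma f_alpha_right:
  "0 \<le> t \<Longrightarrow> t \<le> 1/2 \<Longrightarrow> 0 \<le> u \<Longrightarrow> u \<le> 1/2 \<Longrightarrow> f_alpha \<alpha> t = f_alpha \<alpha> u - tan \<alpha> * (t - u)"
  by (simp add: f_alpha_eq max_def algebra_simps)

lemma continuous_on_f_alpha: "continuous_on UNIV (f_alpha \<alpha>)"
  unfolding f_alpha_eq[abs_def] by (intro continuous_intros)

lemma Gamma_alpha_eq: "Gamma_alpha \<alpha> = {p. snd p = f_alpha \<alpha> (fst p)}"
  unfolding Gamma_alpha_def by auto

lemma T_alpha_eq: "T_alpha \<alpha> = Gamma_alpha \<alpha> \<inter> {p. -1/2 \<le> fst p \<and> fst p \<le> 1/2}"
  unfolding T_alpha_def Gamma_alpha_eq by auto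

lemma closed_Gamma_alpha: "closed (Gamma_alpha \<alpha>)"
  unfolding Gamma_alpha_eq
  by (rule closed_Collect_eq)
     (intro continuous_intros continuous_on_compose2[OF continuous_on_f_alpha] | simp)+

lemma Gamma_alpha_borel [measurable]: "Gamma_alpha \<alpha> \<in> sets borel"
  using closed_Gamma_alpha by measurable

lemma f_alpha_lipschitz:
  assumes "0 \<le> tan \<alpha>"
  shows "\<bar>f_alpha \<alpha> t - f_alpha \<alpha> s\<bar> \<le> tan \<alpha> * \<bar>t - s\<bar>"
proof -
  have "\<bar>max 0 (1/2 - \<bar>t\<bar>) - max 0 (1/2 - \<bar>s\<bar>)\<bar> \<le> \<bar>t - s\<bar>" by (simp add: max_def abs_if)
  then have "tan \<alpha> * \<bar>max 0 (1/2 - \<bar>t\<bar>) - max 0 (1/2 - \<bar>s\<bar>)\<bar> \<le> tan \<alpha> * \<bar>t - s\<bar>"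
    using assms by (rule mult_left_mono)
  then show ?thesis using assms by (simp add: f_alpha_eq abs_mult right_diff_distrib[symmetric])
qed

lemma f_alpha_oscillation:
  assumes "0 \<le> tan \<alpha>"
  shows "\<bar>f_alpha \<alpha> t - f_alpha \<alpha> s\<bar> \<le> tan \<alpha> / 2"
proof -
  have "0 \<le> f_alpha \<alpha> u \<and> f_alpha \<alpha> u \<le> tan \<alpha> / 2" for u
  proof -
    have "max 0 (1/2 - \<bar>u\<bar>) \<le> 1/2" by (simp add: max_def)
    from mult_left_mono[OF this assms] show ?thesis using assms by (simp add: f_alpha_eq)
  qed
  from this[of t] this[of s] show ?thesis unfolding abs_le_iff by linarith
qed

definition near_kink :: "real \<Rightarrow> real \<Rightarrow> bool" where
  "near_kink s r \<longleftrightarrow> (\<exists>p\<in>{-1/2, 0, 1/2}. \<bar>s - p\<bar> < 2 * r)"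

lemma near_kink_iff: "near_kink s r \<longleftrightarrow> \<bar>s + 1/2\<bar> < 2 * r \<or> \<bar>s\<bar> < 2 * r \<or> \<bar>s - 1/2\<bar> < 2 * r"
  by (simp add: near_kink_def)

lemma f_alpha_affine_away_from_kinks:
  assumes "\<not> near_kink s r"
  obtains \<sigma> where "\<And>t. \<bar>t - s\<bar> < 2 * r \<Longrightarrow> f_alpha \<alpha> t = f_alpha \<alpha> s + \<sigma> * (t - s)"
proof (cases "r > 0")
  case True
  have "2 * r \<le> \<bar>s + 1/2\<bar>" "2 * r \<le> \<bar>s\<bar>" "2 * r \<le> \<bar>s - 1/2\<bar>"
    using assms by (auto simp: near_kink_def)
  then have "(s + 2 * r \<le> -1/2 \<or> 1/2 \<le> s - 2 * r) \<or> (-1/2 \<le> s - 2 * r \<and> s + 2 * r \<le> 0)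
      \<or> (0 \<le> s - 2 * r \<and> s + 2 * r \<le> 1/2)"
    using True by (simp only: abs_if split: if_splits) linarith+
  then consider "s + 2 * r \<le> -1/2 \<or> 1/2 \<le> s - 2 * r" | "-1/2 \<le> s - 2 * r" "s + 2 * r \<le> 0"
    | "0 \<le> s - 2 * r" "s + 2 * r \<le> 1/2"
    by blast
  then show ?thesis
  proof cases
    case 1
    have zero: "f_alpha \<alpha> t = 0" if "\<bar>t - s\<bar> < 2 * r" for t
      using 1 that by (intro f_alpha_outside) (auto simp: abs_less_iff)
    show ?thesis by (rule that[of 0]) (simp add: zero zero[of s] True)
  next
    case 2
    have "f_alpha \<alpha> t = f_alpha \<alpha> s + tan \<alpha> * (t - s)" if "\<bar>t - s\<bar> < 2 * r" for t
      using f_alpha_left[of t s] 2 that True by (auto simp: abs_less_iff)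
    then show ?thesis by (rule that)
  next
    case 3
    have "f_alpha \<alpha> t = f_alpha \<alpha> s + - tan \<alpha> * (t - s)" if "\<bar>t - s\<bar> < 2 * r" for t
      using f_alpha_right[of t s] 3 that True by (auto simp: abs_less_iff)
    then show ?thesis by (rule that)
  qed
next
  case False
  then have "\<not> \<bar>t - s\<bar> < 2 * r" for t by (smt (verit) abs_ge_zero)
  then show ?thesis using that by blast
qed

locale tent_angle =
  fixes \<alpha> :: real
  assumes alpha_pos: "0 < \<alpha>" and alpha_le: "\<alpha> \<le> pi/4"
begin

lemma cos_alpha_pos: "0 < cos \<alpha>"
  using alpha_pos alpha_le by (intro cos_gt_zero) (auto simp: pi_gt_zero)

lemma tan_alpha_nonneg: "0 \<le> tan \<alpha>"
  using alpha_pos alpha_le by (intro tan_pos_pi2_le) auto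

lemma tan_alpha_le_1: "tan \<alpha> \<le> 1"
  using tan_mono_le[of \<alpha> "pi/4"] alpha_pos alpha_le by (simp add: tan_45)

lemma cos_alpha_sq_ge: "1/2 \<le> (cos \<alpha>)\<^sup>2"
proof -
  have "sqrt 2 / 2 \<le> cos \<alpha>"
    using cos_monotone_0_pi_le[of \<alpha> "pi/4"] alpha_pos alpha_le by (simp add: cos_45)
  then have "(sqrt 2 / 2)\<^sup>2 \<le> (cos \<alpha>)\<^sup>2" by (intro power_mono) auto
  then show ?thesis by (simp add: power_divide)
qed

lemma tan_alpha_sq_le: "(tan \<alpha>)\<^sup>2 \<le> 2 * (sin \<alpha>)\<^sup>2"
proof -
  have "(sin \<alpha>)\<^sup>2 * 1 \<le> (sin \<alpha>)\<^sup>2 * (2 * (cos \<alpha>)\<^sup>2)"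
    using cos_alpha_sq_ge by (intro mult_left_mono) auto
  then show ?thesis using cos_alpha_pos by (simp add: tan_def power_divide divide_le_eq)
qed

lemma one_minus_cos_alpha_le: "1 - cos \<alpha> \<le> (sin \<alpha>)\<^sup>2"
proof -
  have "(1 - cos \<alpha>) * 1 \<le> (1 - cos \<alpha>) * (1 + cos \<alpha>)"
    using cos_alpha_pos by (intro mult_left_mono) auto
  then show ?thesis unfolding sin_squared_eq by (simp add: power2_eq_square algebra_simps)
qed

lemma cos_alpha_mult_sqrt: "cos \<alpha> * sqrt (1 + (tan \<alpha>)\<^sup>2) = 1"
proof -
  have "1 + (tan \<alpha>)\<^sup>2 = (1 / cos \<alpha>)\<^sup>2"
    using cos_alpha_pos by (simp add: tan_def power_divide field_simps sin_squared_eq)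
  then show ?thesis using cos_alpha_pos by simp
qed

end

section \<open>Shadows of balls centred on a graph\<close>

definition shadow :: "(real \<Rightarrow> real) \<Rightarrow> real \<times> real \<Rightarrow> real \<Rightarrow> real set" where
  "shadow g x \<rho> = {t. dist (t, g t) x < \<rho>}"

lemma mem_shadow_iff:
  assumes "0 \<le> \<rho>"
  shows "t \<in> shadow g (s, g s) \<rho> \<longleftrightarrow> (t - s)\<^sup>2 + (g t - g s)\<^sup>2 < \<rho>\<^sup>2"
proof -
  have "t \<in> shadow g (s, g s) \<rho> \<longleftrightarrow> sqrt ((t - s)\<^sup>2 + (g t - g s)\<^sup>2) < sqrt (\<rho>\<^sup>2)"
    using assms by (simp add: shadow_def dist_Pair_Pair dist_real_def)
  then show ?thesis by (simp only: real_sqrt_less_iff)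
qed

lemma shadow_subset: "shadow g (s, g s) \<rho> \<subseteq> {s - \<rho><..<s + \<rho>}"
proof
  fix t assume "t \<in> shadow g (s, g s) \<rho>"
  moreover have "\<bar>t - s\<bar> \<le> dist (t, g t) (s, g s)"
    by (metis dist_real_def fst_conv real_sqrt_sum_squares_ge1 dist_Pair_Pair)
  ultimately show "t \<in> {s - \<rho><..<s + \<rho>}" by (auto simp: shadow_def abs_less_iff)
qed

lemma shadow_superset_lipschitz:
  assumes lipschitz: "\<And>t. \<bar>g t - g s\<bar> \<le> L * \<bar>t - s\<bar>"
  shows "{s - \<rho> / sqrt (1 + L\<^sup>2)<..<s + \<rho> / sqrt (1 + L\<^sup>2)} \<subseteq> shadow g (s, g s) \<rho>"
proof
  fix t assume "t \<in> {s - \<rho> / sqrt (1 + L\<^sup>2)<..<s + \<rho> / sqrt (1 + L\<^sup>2)}"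
  then have "\<bar>t - s\<bar> < \<rho> / sqrt (1 + L\<^sup>2)" by (auto simp: abs_less_iff)
  moreover have "sqrt (1 + L\<^sup>2) > 0" by (simp add: add_pos_nonneg)
  ultimately have lt: "\<bar>t - s\<bar> * sqrt (1 + L\<^sup>2) < \<rho>" by (simp add: pos_less_divide_eq)
  then have "0 \<le> \<rho>" by (smt (verit) mult_nonneg_nonneg abs_ge_zero real_sqrt_ge_zero zero_le_power2)
  have "(g t - g s)\<^sup>2 \<le> (L * \<bar>t - s\<bar>)\<^sup>2"
    using lipschitz[of t] by (metis abs_ge_zero power2_abs power_mono)
  then have "(t - s)\<^sup>2 + (g t - g s)\<^sup>2 \<le> (\<bar>t - s\<bar> * sqrt (1 + L\<^sup>2))\<^sup>2"
    by (simp add: power_mult_distrib add_pos_nonneg algebra_simps)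
  also have "\<dots> < \<rho>\<^sup>2"
    using lt by (intro power_strict_mono) auto
  finally show "t \<in> shadow g (s, g s) \<rho>" using mem_shadow_iff[OF \<open>0 \<le> \<rho>\<close>] by blast
qed

lemma shadow_superset_oscillation:
  assumes oscillation: "\<And>t. \<bar>g t - g s\<bar> \<le> h" and "0 \<le> h" "h \<le> \<rho>"
  shows "{s - (\<rho> - h\<^sup>2 / \<rho>)<..<s + (\<rho> - h\<^sup>2 / \<rho>)} \<subseteq> shadow g (s, g s) \<rho>"
proof
  define q where "q = \<rho> - h\<^sup>2 / \<rho>"
  have h_le: "h\<^sup>2 \<le> \<rho>\<^sup>2" using assms by (simp add: power_mono)
  then have "h\<^sup>2 / \<rho> \<le> \<rho>"
    using assms by (cases "\<rho> = 0") (simp_all add: divide_le_eq power2_eq_square)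
  then have "0 \<le> q" by (simp add: q_def)
  have "q\<^sup>2 + h\<^sup>2 = \<rho>\<^sup>2 - h\<^sup>2 + h\<^sup>2 * (h\<^sup>2 / \<rho>\<^sup>2)"
    using assms by (auto simp: q_def power2_eq_square field_simps)
  also have "\<dots> \<le> \<rho>\<^sup>2"
    using mult_left_le[of "h\<^sup>2 / \<rho>\<^sup>2" "h\<^sup>2"] h_le by (simp add: divide_le_eq_1)
  finally have q: "q\<^sup>2 + h\<^sup>2 \<le> \<rho>\<^sup>2" .
  fix t assume "t \<in> {s - (\<rho> - h\<^sup>2 / \<rho>)<..<s + (\<rho> - h\<^sup>2 / \<rho>)}"
  then have "\<bar>t - s\<bar> < q" by (simp add: abs_less_iff q_def)
  then have "(t - s)\<^sup>2 < q\<^sup>2" by (metis abs_ge_zero power2_abs power_strict_mono zero_less_numeral)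
  moreover have "(g t - g s)\<^sup>2 \<le> h\<^sup>2"
    using oscillation[of t] by (metis abs_ge_zero power2_abs power_mono)
  ultimately show "t \<in> shadow g (s, g s) \<rho>"
    using q mem_shadow_iff[of \<rho>] assms by auto
qed

lemma shadow_affine:
  assumes affine: "\<And>t. \<bar>t - s\<bar> < R \<Longrightarrow> g t = g s + \<sigma> * (t - s)" and "0 \<le> \<rho>" "\<rho> \<le> R"
  shows "shadow g (s, g s) \<rho> = {s - \<rho> / sqrt (1 + \<sigma>\<^sup>2)<..<s + \<rho> / sqrt (1 + \<sigma>\<^sup>2)}"
proof -
  define c where "c = sqrt (1 + \<sigma>\<^sup>2)"
  have "c \<ge> 1" by (simp add: c_def)
  have near: "t \<in> shadow g (s, g s) \<rho> \<longleftrightarrow> \<bar>t - s\<bar> * c < \<rho>" if "\<bar>t - s\<bar> < R" for t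
  proof -
    have diff: "g t - g s = \<sigma> * (t - s)" using affine[OF that] by simp
    have "(t - s)\<^sup>2 + (g t - g s)\<^sup>2 = (\<bar>t - s\<bar> * c)\<^sup>2"
      unfolding diff c_def by (simp add: power_mult_distrib add_pos_nonneg distrib_left)
    then have "t \<in> shadow g (s, g s) \<rho> \<longleftrightarrow> (\<bar>t - s\<bar> * c)\<^sup>2 < \<rho>\<^sup>2"
      using mem_shadow_iff[OF \<open>0 \<le> \<rho>\<close>, of t g s] by simp
    also have "\<dots> \<longleftrightarrow> \<bar>t - s\<bar> * c < \<rho>"
      using power_mono_iff[OF \<open>0 \<le> \<rho>\<close>, of "\<bar>t - s\<bar> * c" 2] \<open>c \<ge> 1\<close> by (simp add: not_le[symmetric])
    finally show ?thesis .
  qed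
  have iff: "t \<in> shadow g (s, g s) \<rho> \<longleftrightarrow> \<bar>t - s\<bar> * c < \<rho>" for t
  proof (cases "\<bar>t - s\<bar> < R")
    case False
    have "\<bar>t - s\<bar> \<le> \<bar>t - s\<bar> * c" using \<open>c \<ge> 1\<close> by (simp add: mult_le_cancel_left1)
    then have "\<not> \<bar>t - s\<bar> * c < \<rho>" using False \<open>\<rho> \<le> R\<close> by linarith
    moreover have "t \<notin> shadow g (s, g s) \<rho>"
      using False shadow_subset[of g s \<rho>] \<open>\<rho> \<le> R\<close> by (auto simp: abs_less_iff)
    ultimately show ?thesis by blast
  qed (rule near)
  show ?thesis
  proof (rule set_eqI)
    fix t
    have "t \<in> shadow g (s, g s) \<rho> \<longleftrightarrow> \<bar>t - s\<bar> < \<rho> / c"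
      using iff[of t] \<open>c \<ge> 1\<close> by (simp add: pos_less_divide_eq)
    also have "\<dots> \<longleftrightarrow> t \<in> {s - \<rho> / c<..<s + \<rho> / c}"
      by (auto simp: abs_less_iff)
    finally show "t \<in> shadow g (s, g s) \<rho> \<longleftrightarrow> t \<in> {s - \<rho> / sqrt (1 + \<sigma>\<^sup>2)<..<s + \<rho> / sqrt (1 + \<sigma>\<^sup>2)}"
      by (simp only: c_def)
  qed
qed

lemma shadow_fmeasurable:
  assumes "continuous_on UNIV g"
  shows "shadow g (s, g s) \<rho> \<in> fmeasurable lborel"
proof (rule fmeasurableI2[of "{s - \<rho><..<s + \<rho>}"])
  show "{s - \<rho><..<s + \<rho>} \<in> fmeasurable lborel"
    using fmeasurable_box[of "s - \<rho>" "s + \<rho>"] by simp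
  have "open (shadow g (s, g s) \<rho>)"
    unfolding shadow_def
    by (rule open_Collect_less) (intro continuous_intros continuous_on_compose2[OF assms] | simp)+
  then show "shadow g (s, g s) \<rho> \<in> sets lborel" by simp
qed (rule shadow_subset)

lemma measure_ge_if_Ioo_subset:
  assumes "{c<..<d} \<subseteq> A" "A \<in> fmeasurable lborel"
  shows "d - c \<le> measure lborel A"
proof (cases "c \<le> d")
  case True
  then show ?thesis
    using measure_mono_fmeasurable[OF assms(1) _ assms(2)] by simp
qed (use measure_nonneg[of lborel A] in linarith)

lemma measure_shadow_le:
  assumes "continuous_on UNIV g" "0 \<le> \<rho>"
  shows "measure lborel (shadow g (s, g s) \<rho>) \<le> 2 * \<rho>"
proof -
  have Ioo: "{s - \<rho><..<s + \<rho>} \<in> fmeasurable lborel"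
    using fmeasurable_box[of "s - \<rho>" "s + \<rho>"] by simp
  show ?thesis
    using measure_mono_fmeasurable[OF shadow_subset _ Ioo] shadow_fmeasurable[OF assms(1), of s \<rho>] assms(2)
    by (simp add: fmeasurable_def)
qed

definition decay :: "real \<Rightarrow> real" where
  "decay r = (if r \<le> 1 then 1 else 1 / r ^ 4)"

context tent_angle
begin

lemma measure_shadow_ge_cos:
  "2 * \<rho> * cos \<alpha> \<le> measure lborel (shadow (f_alpha \<alpha>) (s, f_alpha \<alpha> s) \<rho>)"
proof -
  have "sqrt (1 + (tan \<alpha>)\<^sup>2) = 1 / cos \<alpha>"
    using cos_alpha_mult_sqrt cos_alpha_pos by (simp add: eq_divide_eq mult.commute)
  then have "2 * \<rho> * cos \<alpha>
      = (s + \<rho> / sqrt (1 + (tan \<alpha>)\<^sup>2)) - (s - \<rho> / sqrt (1 + (tan \<alpha>)\<^sup>2))" by simp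
  also have "\<dots> \<le> measure lborel (shadow (f_alpha \<alpha>) (s, f_alpha \<alpha> s) \<rho>)"
    by (rule measure_ge_if_Ioo_subset[OF shadow_superset_lipschitz[OF f_alpha_lipschitz[OF tan_alpha_nonneg]]
        shadow_fmeasurable[OF continuous_on_f_alpha]])
  finally show ?thesis .
qed

lemma measure_shadow_ge_large_radius:
  assumes "1 \<le> \<rho>"
  shows "2 * (\<rho> - (tan \<alpha> / 2)\<^sup>2 / \<rho>) \<le> measure lborel (shadow (f_alpha \<alpha>) (s, f_alpha \<alpha> s) \<rho>)"
  using measure_ge_if_Ioo_subset[OF shadow_superset_oscillation[OF f_alpha_oscillation[OF tan_alpha_nonneg]]
      shadow_fmeasurable[OF continuous_on_f_alpha]] tan_alpha_nonneg tan_alpha_le_1 assms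
  by simp

lemma shadow_ratio_bounds:
  fixes s :: real
  assumes "0 < \<rho>"
  defines "q \<equiv> measure lborel (shadow (f_alpha \<alpha>) (s, f_alpha \<alpha> s) \<rho>) / \<rho>"
  shows "2 - 2 * (sin \<alpha>)\<^sup>2 \<le> q" and "q \<le> 2" and "1 \<le> \<rho> \<Longrightarrow> 2 - (sin \<alpha>)\<^sup>2 / \<rho>\<^sup>2 \<le> q"
proof -
  have "2 * cos \<alpha> \<le> q"
    using measure_shadow_ge_cos[of \<rho> s] assms by (simp add: q_def field_simps)
  then show "2 - 2 * (sin \<alpha>)\<^sup>2 \<le> q" using one_minus_cos_alpha_le by linarith
  show "q \<le> 2"
    using measure_shadow_le[OF continuous_on_f_alpha[of \<alpha>], of \<rho> s] assms by (simp add: q_def field_simps)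
  assume "1 \<le> \<rho>"
  have "2 - 2 * (tan \<alpha> / 2)\<^sup>2 / \<rho>\<^sup>2 = 2 * (\<rho> - (tan \<alpha> / 2)\<^sup>2 / \<rho>) / \<rho>"
    using assms(1) by (simp add: field_simps power2_eq_square)
  also have "\<dots> \<le> q"
    unfolding q_def using assms(1)
    by (intro divide_right_mono measure_shadow_ge_large_radius \<open>1 \<le> \<rho>\<close>) simp
  finally have "2 - 2 * (tan \<alpha> / 2)\<^sup>2 / \<rho>\<^sup>2 \<le> q" .
  moreover have "2 * (tan \<alpha> / 2)\<^sup>2 / \<rho>\<^sup>2 \<le> (sin \<alpha>)\<^sup>2 / \<rho>\<^sup>2"
    using tan_alpha_sq_le by (intro divide_right_mono) (simp_all add: power_divide)
  ultimately show "2 - (sin \<alpha>)\<^sup>2 / \<rho>\<^sup>2 \<le> q" by linarith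
qed

lemma shadow_ratio_diff_sq_le:
  fixes s :: real
  assumes "0 < r"
  defines "q \<equiv> \<lambda>\<rho>. measure lborel (shadow (f_alpha \<alpha>) (s, f_alpha \<alpha> s) \<rho>) / \<rho>"
  shows "(q r - q (2 * r))\<^sup>2 \<le> 4 * sin \<alpha> ^ 4 * decay r"
proof (cases "r \<le> 1")
  case True
  have "\<bar>q r - q (2 * r)\<bar> \<le> 2 * (sin \<alpha>)\<^sup>2"
    using shadow_ratio_bounds(1,2)[of r s] shadow_ratio_bounds(1,2)[of "2 * r" s] assms
    unfolding q_def by (simp add: abs_le_iff)
  then have "(q r - q (2 * r))\<^sup>2 \<le> (2 * (sin \<alpha>)\<^sup>2)\<^sup>2"
    by (metis abs_ge_zero power2_abs power_mono)
  then show ?thesis using True by (simp add: decay_def power_mult_distrib flip: power_mult)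
next
  case False
  have "(sin \<alpha>)\<^sup>2 / (2 * r)\<^sup>2 \<le> (sin \<alpha>)\<^sup>2 / r\<^sup>2"
    using False by (intro divide_left_mono) (simp_all add: power_mono)
  then have "\<bar>q r - q (2 * r)\<bar> \<le> (sin \<alpha>)\<^sup>2 / r\<^sup>2"
    using shadow_ratio_bounds[of r s] shadow_ratio_bounds[of "2 * r" s] False
    unfolding q_def by (simp add: abs_le_iff)
  then have "(q r - q (2 * r))\<^sup>2 \<le> ((sin \<alpha>)\<^sup>2 / r\<^sup>2)\<^sup>2"
    by (metis abs_ge_zero power2_abs power_mono)
  also have "\<dots> = sin \<alpha> ^ 4 / r ^ 4"
    by (simp add: power_divide flip: power_mult)
  also have "\<dots> \<le> 4 * sin \<alpha> ^ 4 / r ^ 4"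
    by (intro divide_right_mono) (simp_all add: zero_le_even_power)
  finally show ?thesis using False by (simp add: decay_def)
qed

end

section \<open>The measure and its projection\<close>

definition mu_alpha_setfun :: "real \<Rightarrow> (real \<times> real) set \<Rightarrow> ennreal" where
  "mu_alpha_setfun \<alpha> A = ennreal (cos \<alpha>) * H1 (A \<inter> T_alpha \<alpha>) + H1 (A \<inter> (Gamma_alpha \<alpha> - T_alpha \<alpha>))"

lemma mu_alpha_eq_measure_of: "mu_alpha \<alpha> = measure_of UNIV (sets borel) (mu_alpha_setfun \<alpha>)"
  unfolding mu_alpha_def mu_alpha_setfun_def[abs_def] ..

lemma sigma_sets_borel: "sigma_sets UNIV (sets borel) = (sets borel :: ('a::topological_space) set set)"
  using sigma_algebra.sigma_sets_eq[OF sets.sigma_algebra_axioms, of borel] by simp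

lemma sets_mu_alpha [measurable_cong]: "sets (mu_alpha \<alpha>) = sets borel"
  unfolding mu_alpha_eq_measure_of by (simp add: sets_measure_of_conv sigma_sets_borel)

lemma space_mu_alpha: "space (mu_alpha \<alpha>) = UNIV"
  unfolding mu_alpha_eq_measure_of by (simp add: space_measure_of_conv)

lemma emeasure_mu_alpha:
  "emeasure (mu_alpha \<alpha>) A =
     (if A \<in> sets borel \<and> measure_space UNIV (sets borel) (mu_alpha_setfun \<alpha>)
      then mu_alpha_setfun \<alpha> A else 0)"
  unfolding mu_alpha_eq_measure_of by (simp add: emeasure_measure_of_conv sigma_sets_borel)

definition kappa :: real where
  "kappa = enn2real (H1 (seg 0 1))"

lemma kappa_nonneg: "0 \<le> kappa"
  by (simp add: kappa_def)

lemma kappa_le_1: "kappa \<le> 1"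
proof -
  have "enn2real (H1 (seg 0 1)) \<le> enn2real (ennreal 1)"
    using H1_seg_le[of 0 1] by (intro enn2real_mono) simp_all
  then show ?thesis by (simp add: kappa_def)
qed

locale tent_measure = tent_angle +
  assumes setfun_measure_space: "measure_space UNIV (sets borel) (mu_alpha_setfun \<alpha>)"
begin

abbreviation mu :: "(real \<times> real) measure" where
  "mu \<equiv> mu_alpha \<alpha>"

lemma emeasure_mu: "A \<in> sets borel \<Longrightarrow> emeasure mu A = mu_alpha_setfun \<alpha> A"
  using setfun_measure_space by (simp add: emeasure_mu_alpha)

lemma emeasure_mu_flat:
  assumes "A \<in> sets borel" "A \<subseteq> Gamma_alpha \<alpha> - T_alpha \<alpha>"
  shows "emeasure mu A = H1 A"
proof -
  have "A \<inter> T_alpha \<alpha> = {}" "A \<inter> (Gamma_alpha \<alpha> - T_alpha \<alpha>) = A" using assms(2) by auto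
  then show ?thesis using assms(1) by (simp add: emeasure_mu mu_alpha_setfun_def)
qed

lemma H1_seg_split:
  assumes "a < b" "b < c" "c \<le> -1/2"
  shows "H1 (seg a c) = H1 (seg a b) + H1 (seg b c)"
proof -
  have flat: "seg a' c' \<subseteq> Gamma_alpha \<alpha> - T_alpha \<alpha>" if "c' \<le> c" for a' c'
    using that assms by (auto simp: seg_def Gamma_alpha_eq T_alpha_eq f_alpha_outside)
  have "{(b, 0)} \<subseteq> Gamma_alpha \<alpha> - T_alpha \<alpha>"
    using assms by (auto simp: Gamma_alpha_eq T_alpha_eq f_alpha_outside)
  then have "emeasure mu {(b, 0)} = 0"
    by (simp add: emeasure_mu_flat H1_subset_singleton)
  then have "{(b, 0)} \<in> null_sets mu" by (simp add: null_sets_def sets_mu_alpha)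
  have "seg a c = (seg a b \<union> seg b c) \<union> {(b, 0)}"
    using assms by (auto simp: seg_def)
  then have "emeasure mu (seg a c) = emeasure mu ((seg a b \<union> seg b c) \<union> {(b, 0)})"
    by simp
  also have "\<dots> = emeasure mu (seg a b \<union> seg b c)"
    by (rule emeasure_Un_null_set) (simp_all add: sets_mu_alpha \<open>{(b, 0)} \<in> null_sets mu\<close>)
  also have "\<dots> = emeasure mu (seg a b) + emeasure mu (seg b c)"
    by (rule plus_emeasure[symmetric]) (simp_all add: sets_mu_alpha, auto simp: seg_def)
  finally show ?thesis
    using assms by (simp add: emeasure_mu_flat flat)
qed

lemma H1_seg_eq:
  assumes "a < b"
  shows "H1 (seg a b) = ennreal (kappa * (b - a))"
proof -
  define g where "g L = enn2real (H1 (seg 0 L))" for L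
  have finite: "H1 (seg 0 L) < top" if "L > 0" for L
    using H1_seg_le[OF that] by (simp add: le_less_trans)
  have linear: "g L = g 1 * L" if "L > 0" for L
  proof (rule nonneg_additive_imp_linear[OF _ _ that])
    fix x y :: real assume xy: "x > 0" "y > 0"
    have "H1 (seg 0 (x + y)) = H1 (seg (-1-x-y) (-1))" using H1_seg_shift[of "-1-x-y" "-1"] by simp
    also have "\<dots> = H1 (seg (-1-x-y) (-1-y)) + H1 (seg (-1-y) (-1))"
      using xy by (intro H1_seg_split) auto
    also have "\<dots> = H1 (seg 0 x) + H1 (seg 0 y)"
      using H1_seg_shift[of "-1-x-y" "-1-y"] H1_seg_shift[of "-1-y" "-1"] by simp
    finally show "g (x + y) = g x + g y"
      using xy finite by (simp add: g_def enn2real_plus)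
  qed (simp add: g_def)
  have "enn2real (H1 (seg 0 (b - a))) = kappa * (b - a)"
    using linear[of "b - a"] assms unfolding g_def kappa_def by simp
  then show ?thesis
    using finite[of "b - a"] assms H1_seg_shift[of a b] by (metis diff_gt_0_iff_gt ennreal_enn2real)
qed

lemma H1_affine_graph:
  assumes "c < d"
  shows "H1 {p. c < fst p \<and> fst p < d \<and> snd p = y0 + \<sigma> * (fst p - c)}
       = ennreal (kappa * (d - c) * sqrt (1 + \<sigma>\<^sup>2))"
proof -
  define \<beta> where "\<beta> = arctan \<sigma>"
  have cos_\<beta>: "cos \<beta> = 1 / sqrt (1 + \<sigma>\<^sup>2)" and tan_\<beta>: "tan \<beta> = \<sigma>"
    by (simp_all add: \<beta>_def cos_arctan tan_arctan)
  have "cos \<beta> > 0" by (simp add: cos_\<beta> add_pos_nonneg)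
  from rot_translate_seg_eq_affine_graph[OF this, of c y0 d]
  have "{p. c < fst p \<and> fst p < d \<and> snd p = y0 + \<sigma> * (fst p - c)}
      = (\<lambda>p. p + (c, y0)) ` rot \<beta> ` seg 0 ((d - c) / cos \<beta>)"
    by (simp add: tan_\<beta>)
  moreover have "(d - c) / cos \<beta> > 0" using assms \<open>cos \<beta> > 0\<close> by simp
  ultimately show ?thesis
    by (simp add: H1_translation H1_rotation H1_seg_eq cos_\<beta> mult.assoc)
qed

end

context tent_measure
begin

lemma measurable_fst_mu [measurable]: "fst \<in> mu \<rightarrow>\<^sub>M lborel"
proof -
  have "fst \<in> (borel :: (real \<times> real) measure) \<rightarrow>\<^sub>M (borel :: real measure)"
    by (rule borel_measurable_continuous_onI) (intro continuous_intros)
  then show ?thesis using measurable_cong_sets[OF sets_mu_alpha sets_lborel] by simp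
qed

lemma emeasure_distr_fst:
  assumes "A \<in> sets borel"
  shows "emeasure (distr mu lborel fst) A = mu_alpha_setfun \<alpha> (fst -` A)"
proof -
  have "fst -` A \<in> sets (borel :: (real \<times> real) measure)"
    using measurable_sets[OF measurable_fst_mu, of A] assms by (simp add: sets_mu_alpha space_mu_alpha)
  moreover have "emeasure (distr mu lborel fst) A = emeasure mu (fst -` A \<inter> space mu)"
    by (rule emeasure_distr[OF measurable_fst_mu]) (use assms in simp)
  ultimately show ?thesis by (simp add: space_mu_alpha emeasure_mu)
qed

lemma emeasure_distr_fst_singleton: "emeasure (distr mu lborel fst) {c} = 0"
proof -
  have "fst -` {c} \<inter> T_alpha \<alpha> \<subseteq> {(c, f_alpha \<alpha> c)}"
    "fst -` {c} \<inter> (Gamma_alpha \<alpha> - T_alpha \<alpha>) \<subseteq> {(c, f_alpha \<alpha> c)}"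
    by (auto simp: Gamma_alpha_eq T_alpha_eq)
  then show ?thesis by (simp add: emeasure_distr_fst mu_alpha_setfun_def H1_subset_singleton)
qed

lemma emeasure_distr_fst_flat:
  assumes "c < d" "d \<le> -1/2 \<or> 1/2 \<le> c"
  shows "emeasure (distr mu lborel fst) {c<..<d} = ennreal (kappa * (d - c))"
proof -
  have outside: "f_alpha \<alpha> t = 0 \<and> \<not> (-1/2 \<le> t \<and> t \<le> 1/2)" if "c < t" "t < d" for t
    using that assms by (auto intro: f_alpha_outside)
  then have "fst -` {c<..<d} \<inter> T_alpha \<alpha> = {}" by (auto simp: T_alpha_eq)
  moreover have "fst -` {c<..<d} \<inter> (Gamma_alpha \<alpha> - T_alpha \<alpha>)
      = {p. c < fst p \<and> fst p < d \<and> snd p = 0 + 0 * (fst p - c)}"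
    using outside by (auto simp: Gamma_alpha_eq T_alpha_eq)
  ultimately show ?thesis
    using H1_affine_graph[OF assms(1), of 0 0] by (simp add: emeasure_distr_fst mu_alpha_setfun_def)
qed

lemma emeasure_distr_fst_slanted:
  assumes "c < d" "-1/2 \<le> c" "d \<le> 1/2" "\<sigma>\<^sup>2 = (tan \<alpha>)\<^sup>2"
    and affine: "\<And>t. c \<le> t \<Longrightarrow> t \<le> d \<Longrightarrow> f_alpha \<alpha> t = f_alpha \<alpha> c + \<sigma> * (t - c)"
  shows "emeasure (distr mu lborel fst) {c<..<d} = ennreal (kappa * (d - c))"
proof -
  have inside: "f_alpha \<alpha> t = f_alpha \<alpha> c + \<sigma> * (t - c) \<and> -1/2 \<le> t \<and> t \<le> 1/2"
    if "c < t" "t < d" for t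
    using that assms(2,3) affine[of t] by simp
  then have "fst -` {c<..<d} \<inter> (Gamma_alpha \<alpha> - T_alpha \<alpha>) = {}"
    by (auto simp: Gamma_alpha_eq T_alpha_eq)
  moreover have "fst -` {c<..<d} \<inter> T_alpha \<alpha>
      = {p. c < fst p \<and> fst p < d \<and> snd p = f_alpha \<alpha> c + \<sigma> * (fst p - c)}"
    using inside by (auto simp: Gamma_alpha_eq T_alpha_eq)
  moreover have "ennreal (cos \<alpha>) * ennreal (kappa * (d - c) * sqrt (1 + \<sigma>\<^sup>2)) = ennreal (kappa * (d - c))"
    using cos_alpha_pos cos_alpha_mult_sqrt kappa_nonneg assms(1,4)
    by (simp add: ennreal_mult''[symmetric] mult.commute mult.left_commute)
  ultimately show ?thesis
    using H1_affine_graph[OF assms(1)] by (simp add: emeasure_distr_fst mu_alpha_setfun_def)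
qed

lemma emeasure_distr_fst_kink_free:
  assumes "c \<le> d" and kink_free: "\<forall>p\<in>{-1/2, 0, 1/2}. p \<notin> {c<..<d}"
  shows "emeasure (distr mu lborel fst) {c<..<d} = ennreal (kappa * (d - c))"
proof (cases "c < d")
  case True
  have "\<not> (c < -1/2 \<and> -1/2 < d)" "\<not> (c < 0 \<and> 0 < d)" "\<not> (c < 1/2 \<and> 1/2 < d)"
    using kink_free by auto
  then have "(d \<le> -1/2 \<or> 1/2 \<le> c) \<or> (-1/2 \<le> c \<and> d \<le> 0) \<or> (0 \<le> c \<and> d \<le> 1/2)"
    using True by linarith
  then consider "d \<le> -1/2 \<or> 1/2 \<le> c" | "-1/2 \<le> c" "d \<le> 0" | "0 \<le> c" "d \<le> 1/2"
    by blast
  then show ?thesis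
  proof cases
    case 2
    have "f_alpha \<alpha> t = f_alpha \<alpha> c + tan \<alpha> * (t - c)" if "c \<le> t" "t \<le> d" for t
      using f_alpha_left[of t c] that 2 by simp
    from emeasure_distr_fst_slanted[OF True _ _ _ this] show ?thesis using 2 by simp
  next
    case 3
    have "f_alpha \<alpha> t = f_alpha \<alpha> c + - tan \<alpha> * (t - c)" if "c \<le> t" "t \<le> d" for t
      using f_alpha_right[of t c] that 3 by simp
    from emeasure_distr_fst_slanted[OF True _ _ _ this] show ?thesis using 3 by simp
  qed (use True emeasure_distr_fst_flat in blast)
qed (use assms in simp)

lemma emeasure_distr_fst_Ioo_split:
  assumes "c \<le> m" "m \<le> d"
  shows "emeasure (distr mu lborel fst) {c<..<d}
       = emeasure (distr mu lborel fst) {c<..<m} + emeasure (distr mu lborel fst) {m<..<d}"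
proof -
  have "{m} \<in> null_sets (distr mu lborel fst)"
    using emeasure_distr_fst_singleton[of m] by (simp add: null_sets_def)
  moreover have "{c<..<m} \<union> {m<..<d} = {c<..<d} - {m}"
    using assms by auto
  ultimately have "emeasure (distr mu lborel fst) ({c<..<m} \<union> {m<..<d}) = emeasure (distr mu lborel fst) {c<..<d}"
    by (simp add: emeasure_Diff_null_set)
  moreover have "emeasure (distr mu lborel fst) ({c<..<m} \<union> {m<..<d})
      = emeasure (distr mu lborel fst) {c<..<m} + emeasure (distr mu lborel fst) {m<..<d}"
    by (rule plus_emeasure[symmetric]) auto
  ultimately show ?thesis by simp
qed

lemma emeasure_distr_fst_Ioo:
  assumes "c \<le> d"
  shows "emeasure (distr mu lborel fst) {c<..<d} = ennreal (kappa * (d - c))"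
proof -
  define clamp where "clamp x = max c (min d x)" for x :: real
  define m1 m2 m3 where "m1 = clamp (-1/2)" and "m2 = clamp 0" and "m3 = clamp (1/2)"
  have order: "c \<le> m1" "m1 \<le> m2" "m2 \<le> m3" "m3 \<le> d"
    using assms by (auto simp: m1_def m2_def m3_def clamp_def)
  have pieces: "emeasure (distr mu lborel fst) {x<..<y} = ennreal (kappa * (y - x))"
    if "(x, y) \<in> {(c, m1), (m1, m2), (m2, m3), (m3, d)}" for x y
    using that assms by (intro emeasure_distr_fst_kink_free)
      (auto simp: m1_def m2_def m3_def clamp_def)
  have "emeasure (distr mu lborel fst) {c<..<d}
      = ennreal (kappa * (m1 - c)) + (ennreal (kappa * (m2 - m1)) + (ennreal (kappa * (m3 - m2))
          + ennreal (kappa * (d - m3))))"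
    using order by (simp add: emeasure_distr_fst_Ioo_split[of c m1 d] emeasure_distr_fst_Ioo_split[of m1 m2 d]
        emeasure_distr_fst_Ioo_split[of m2 m3 d] pieces)
  also have "\<dots> = ennreal (kappa * (m1 - c) + (kappa * (m2 - m1) + (kappa * (m3 - m2) + kappa * (d - m3))))"
    using order kappa_nonneg by (simp add: ennreal_plus[symmetric] del: ennreal_plus)
  also have "\<dots> = ennreal (kappa * (d - c))"
    by (simp add: algebra_simps)
  finally show ?thesis .
qed

lemma distr_fst_mu: "distr mu lborel fst = density lborel (\<lambda>_. ennreal kappa)"
proof (rule measure_eqI_generator_eq[where E = "range (\<lambda>(a, b). box a b)" and \<Omega> = UNIV
      and A = "\<lambda>n. box (- real n) (real n)"])
  show "Int_stable (range (\<lambda>(a, b). box a b :: real set))"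
    by (auto simp: Int_stable_def box_Int_box)
  show "sets (distr mu lborel fst) = sigma_sets UNIV (range (\<lambda>(a, b). box a b))"
    "sets (density lborel (\<lambda>_. ennreal kappa)) = sigma_sets UNIV (range (\<lambda>(a, b). box a b))"
    by (simp_all add: borel_eq_box)
  show "(\<Union>n. box (- real n) (real n :: real)) = UNIV"
  proof (intro equalityI subsetI)
    fix x :: real
    obtain n :: nat where "\<bar>x\<bar> < n" using reals_Archimedean2 by blast
    then have "x \<in> box (- real n) (real n)" by (auto simp: box_real abs_less_iff)
    then show "x \<in> (\<Union>n. box (- real n) (real n))" by blast
  qed simp
  show "emeasure (distr mu lborel fst) X = emeasure (density lborel (\<lambda>_. ennreal kappa)) X"
    if "X \<in> range (\<lambda>(a, b). box a b)" for X
  proof -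
    from that obtain a b :: real where "X = box a b" by auto
    then have X: "X = {a<..<b}" by (simp add: box_real)
    then show ?thesis
      using kappa_nonneg
      by (cases "a \<le> b") (simp_all add: emeasure_density_const emeasure_distr_fst_Ioo ennreal_mult)
  qed
  show "emeasure (distr mu lborel fst) (box (- real n) (real n)) \<noteq> \<infinity>" for n
    by (simp add: box_real emeasure_distr_fst_Ioo)
qed auto

end

context tent_measure
begin

lemma null_sets_mu_outside_graph: "- Gamma_alpha \<alpha> \<in> null_sets mu"
proof -
  have "(- Gamma_alpha \<alpha>) \<inter> T_alpha \<alpha> = {}" "(- Gamma_alpha \<alpha>) \<inter> (Gamma_alpha \<alpha> - T_alpha \<alpha>) = {}"
    by (auto simp: T_alpha_eq)
  then show ?thesis
    by (simp add: null_sets_def sets_mu_alpha emeasure_mu mu_alpha_setfun_def)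
qed

lemma emeasure_mu_restrict_graph:
  assumes "A \<in> sets borel"
  shows "emeasure mu (A \<inter> Gamma_alpha \<alpha>) = emeasure mu A"
proof -
  have "A \<inter> Gamma_alpha \<alpha> = A - (- Gamma_alpha \<alpha>)" by auto
  then show ?thesis
    using emeasure_Diff_null_set[OF null_sets_mu_outside_graph, of A] assms by (simp add: sets_mu_alpha)
qed

lemma measure_mu_ball:
  "measure mu (ball (s, f_alpha \<alpha> s) \<rho>) = kappa * measure lborel (shadow (f_alpha \<alpha>) (s, f_alpha \<alpha> s) \<rho>)"
proof -
  let ?S = "shadow (f_alpha \<alpha>) (s, f_alpha \<alpha> s) \<rho>"
  have S: "?S \<in> sets borel"
    using shadow_fmeasurable[OF continuous_on_f_alpha] by (simp add: fmeasurable_def)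
  then have S': "fst -` ?S \<in> sets (borel :: (real \<times> real) measure)"
    using measurable_sets[OF measurable_fst_mu S[folded sets_lborel]] by (simp add: sets_mu_alpha space_mu_alpha)
  have "ball (s, f_alpha \<alpha> s) \<rho> \<inter> Gamma_alpha \<alpha> = fst -` ?S \<inter> Gamma_alpha \<alpha>"
    by (auto simp: Gamma_alpha_eq shadow_def dist_commute)
  then have "emeasure mu (ball (s, f_alpha \<alpha> s) \<rho>) = emeasure mu (fst -` ?S)"
    using emeasure_mu_restrict_graph[of "ball (s, f_alpha \<alpha> s) \<rho>"] emeasure_mu_restrict_graph[OF S'] by simp
  also have "\<dots> = emeasure (distr mu lborel fst) ?S"
    using emeasure_distr[OF measurable_fst_mu, of ?S] S by (simp add: space_mu_alpha)
  also have "\<dots> = ennreal kappa * emeasure lborel ?S"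
    using S by (simp add: distr_fst_mu emeasure_density_const)
  finally show ?thesis
    using kappa_nonneg by (simp add: measure_def enn2real_mult)
qed

end

section \<open>The square function\<close>

context tent_measure
begin

lemma Delta1_sq_le:
  assumes "0 < r"
  shows "(Delta1 mu (s, f_alpha \<alpha> s) r)\<^sup>2 \<le> (if near_kink s r then 4 * sin \<alpha> ^ 4 * decay r else 0)"
proof -
  define q where "q \<rho> = measure lborel (shadow (f_alpha \<alpha>) (s, f_alpha \<alpha> s) \<rho>) / \<rho>" for \<rho>
  have Delta: "Delta1 mu (s, f_alpha \<alpha> s) r = kappa * (q r - q (2 * r))"
    by (simp add: Delta1_def measure_mu_ball q_def algebra_simps)
  show ?thesis
  proof (cases "near_kink s r")
    case False
    obtain \<sigma> where affine: "\<And>t. \<bar>t - s\<bar> < 2 * r \<Longrightarrow> f_alpha \<alpha> t = f_alpha \<alpha> s + \<sigma> * (t - s)"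
      using f_alpha_affine_away_from_kinks[OF False, where \<alpha> = \<alpha>] by blast
    have "q \<rho> = 2 / sqrt (1 + \<sigma>\<^sup>2)" if "0 < \<rho>" "\<rho> \<le> 2 * r" for \<rho>
    proof -
      have "shadow (f_alpha \<alpha>) (s, f_alpha \<alpha> s) \<rho> = {s - \<rho> / sqrt (1 + \<sigma>\<^sup>2)<..<s + \<rho> / sqrt (1 + \<sigma>\<^sup>2)}"
        using that by (intro shadow_affine[OF affine]) auto
      then show ?thesis using that by (simp add: q_def)
    qed
    then show ?thesis using assms False by (simp add: Delta)
  next
    case True
    have "(kappa * (q r - q (2 * r)))\<^sup>2 \<le> (q r - q (2 * r))\<^sup>2"
    proof -
      have "kappa\<^sup>2 \<le> 1" using kappa_nonneg kappa_le_1 by (simp add: power_le_one)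
      then show ?thesis by (simp add: power_mult_distrib mult_left_le_one_le)
    qed
    also have "\<dots> \<le> 4 * sin \<alpha> ^ 4 * decay r"
      unfolding q_def by (rule shadow_ratio_diff_sq_le[OF assms])
    finally show ?thesis using True by (simp add: Delta)
  qed
qed

end

lemma emeasure_near_kink_le:
  assumes "0 < r"
  shows "emeasure lborel {s. near_kink s r} \<le> ennreal (12 * r)"
proof -
  have "{s. near_kink s r} = {-1/2 - 2*r<..<-1/2 + 2*r} \<union> {-2*r<..<2*r} \<union> {1/2 - 2*r<..<1/2 + 2*r}"
    by (auto simp: near_kink_iff abs_less_iff)
  then have "emeasure lborel {s. near_kink s r}
      \<le> emeasure lborel ({-1/2 - 2*r<..<-1/2 + 2*r} \<union> {-2*r<..<2*r}) + emeasure lborel {1/2 - 2*r<..<1/2 + 2*r}"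
    by (simp add: emeasure_subadditive)
  also have "\<dots> \<le> (emeasure lborel {-1/2 - 2*r<..<-1/2 + 2*r} + emeasure lborel {-2*r<..<2*r})
      + emeasure lborel {1/2 - 2*r<..<1/2 + 2*r}"
    by (intro add_mono emeasure_subadditive) auto
  also have "\<dots> = ennreal (12 * r)" using assms by (simp flip: ennreal_plus)
  finally show ?thesis .
qed

lemma nn_integral_inverse_pow4: "(\<integral>\<^sup>+ r. ennreal (1 / r ^ 4) * indicator {1..} r \<partial>lborel) = ennreal (1/3)"
proof -
  have "(\<integral>\<^sup>+ r. ennreal (1 / r ^ 4) * indicator {1..} r \<partial>lborel) = ennreal (0 - (- 1 / (3 * 1 ^ 3)))"
  proof (rule nn_integral_FTC_atLeast[where F = "\<lambda>x. - 1 / (3 * x ^ 3)"])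
    fix x :: real assume "1 \<le> x"
    then show "((\<lambda>x. - 1 / (3 * x ^ 3)) has_real_derivative 1 / x ^ 4) (at x)"
      by (auto intro!: derivative_eq_intros simp: field_simps power_eq_if)
  qed (real_asymp | simp)+
  then show ?thesis by simp
qed

lemma nn_integral_decay: "(\<integral>\<^sup>+ r. ennreal (decay r) * indicator {0<..} r \<partial>lborel) \<le> ennreal (4/3)"
proof -
  have "(\<integral>\<^sup>+ r. ennreal (decay r) * indicator {0<..} r \<partial>lborel)
      \<le> (\<integral>\<^sup>+ r. indicator {0..1} r + ennreal (1 / r ^ 4) * indicator {1..} r \<partial>lborel)"
    by (rule nn_integral_mono) (auto simp: decay_def indicator_def)
  also have "\<dots> = (\<integral>\<^sup>+ r. indicator {0..1::real} r \<partial>lborel) + (\<integral>\<^sup>+ r. ennreal (1 / r ^ 4) * indicator {1..} r \<partial>lborel)"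
    by (intro nn_integral_add) simp_all
  also have "\<dots> = ennreal 1 + ennreal (1/3)"
    by (simp add: nn_integral_inverse_pow4)
  also have "\<dots> = ennreal (1 + 1/3)"
    by (rule ennreal_plus[symmetric]) simp_all
  also have "\<dots> = ennreal (4/3)"
    by simp
  finally show ?thesis .
qed

definition kink_weight :: "real \<Rightarrow> real \<Rightarrow> real" where
  "kink_weight s r = (if 0 < r \<and> near_kink s r then decay r / r else 0)"

lemma kink_weight_measurable [measurable]:
  "(\<lambda>(s, r). ennreal (kink_weight s r)) \<in> borel_measurable (lborel \<Otimes>\<^sub>M lborel)"
  unfolding kink_weight_def near_kink_iff decay_def by measurable

lemma nn_integral_kink_weight_slice:
  "(\<integral>\<^sup>+ s. ennreal (kink_weight s r) \<partial>lborel) \<le> ennreal 12 * (ennreal (decay r) * indicator {0<..} r)"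
proof (cases "0 < r")
  case True
  have "decay r \<ge> 0" by (simp add: decay_def)
  have "(\<integral>\<^sup>+ s. ennreal (kink_weight s r) \<partial>lborel)
      = (\<integral>\<^sup>+ s. ennreal (decay r / r) * indicator {s. near_kink s r} s \<partial>lborel)"
    using True by (intro nn_integral_cong) (simp add: kink_weight_def indicator_def)
  also have "\<dots> = ennreal (decay r / r) * emeasure lborel {s. near_kink s r}"
    by (rule nn_integral_cmult_indicator) (simp add: near_kink_iff)
  also have "\<dots> \<le> ennreal (decay r / r) * ennreal (12 * r)"
    by (intro mult_left_mono emeasure_near_kink_le True) simp
  also have "\<dots> = ennreal (decay r / r * (12 * r))"
    by (rule ennreal_mult''[symmetric]) (use True in simp)
  also have "\<dots> = ennreal (12 * decay r)"
    using True by (simp add: mult.commute)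
  also have "\<dots> = ennreal 12 * (ennreal (decay r) * indicator {0<..} r)"
    using True \<open>decay r \<ge> 0\<close> by (simp add: ennreal_mult)
  finally show ?thesis .
qed (simp add: kink_weight_def)

lemma nn_integral_kink_weight:
  "(\<integral>\<^sup>+ s. (\<integral>\<^sup>+ r. ennreal (kink_weight s r) \<partial>lborel) \<partial>lborel) \<le> 16"
proof -
  have "(\<integral>\<^sup>+ s. (\<integral>\<^sup>+ r. ennreal (kink_weight s r) \<partial>lborel) \<partial>lborel)
      = (\<integral>\<^sup>+ r. (\<integral>\<^sup>+ s. ennreal (kink_weight s r) \<partial>lborel) \<partial>lborel)"
    using lborel_pair.Fubini'[OF kink_weight_measurable] by simp
  also have "\<dots> \<le> (\<integral>\<^sup>+ r. ennreal 12 * (ennreal (decay r) * indicator {0<..} r) \<partial>lborel)"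
    by (intro nn_integral_mono nn_integral_kink_weight_slice)
  also have "\<dots> = ennreal 12 * (\<integral>\<^sup>+ r. ennreal (decay r) * indicator {0<..} r \<partial>lborel)"
    by (rule nn_integral_cmult) (simp add: decay_def)
  also have "\<dots> \<le> ennreal 12 * ennreal (4/3)"
    by (intro mult_left_mono nn_integral_decay) simp
  also have "\<dots> = ennreal (12 * (4/3))"
    by (rule ennreal_mult[symmetric]) simp_all
  also have "\<dots> = 16"
    by simp
  finally show ?thesis .
qed

context tent_measure
begin

lemma nn_integral_Delta1_sq_le:
  "(\<integral>\<^sup>+ r \<in> {0<..}. ennreal ((Delta1 mu (s, f_alpha \<alpha> s) r)\<^sup>2 / r) \<partial>lborel)
     \<le> ennreal (4 * sin \<alpha> ^ 4) * (\<integral>\<^sup>+ r. ennreal (kink_weight s r) \<partial>lborel)"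
proof -
  have "(\<integral>\<^sup>+ r \<in> {0<..}. ennreal ((Delta1 mu (s, f_alpha \<alpha> s) r)\<^sup>2 / r) \<partial>lborel)
      \<le> (\<integral>\<^sup>+ r. ennreal (4 * sin \<alpha> ^ 4) * ennreal (kink_weight s r) \<partial>lborel)"
  proof (rule nn_integral_mono)
    fix r :: real
    show "ennreal ((Delta1 mu (s, f_alpha \<alpha> s) r)\<^sup>2 / r) * indicator {0<..} r
        \<le> ennreal (4 * sin \<alpha> ^ 4) * ennreal (kink_weight s r)"
    proof (cases "0 < r")
      case True
      have "(Delta1 mu (s, f_alpha \<alpha> s) r)\<^sup>2 / r \<le> 4 * sin \<alpha> ^ 4 * kink_weight s r"
        using Delta1_sq_le[OF True, of s] True by (auto simp: kink_weight_def divide_right_mono)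
      then show ?thesis
        using True by (simp add: ennreal_mult[symmetric] ennreal_leI kink_weight_def decay_def zero_le_even_power)
    qed simp
  qed
  also have "\<dots> = ennreal (4 * sin \<alpha> ^ 4) * (\<integral>\<^sup>+ r. ennreal (kink_weight s r) \<partial>lborel)"
    by (rule nn_integral_cmult) (unfold kink_weight_def near_kink_iff decay_def, measurable)
  finally show ?thesis .
qed

lemma nn_integral_distr_fst_le:
  assumes "h \<in> borel_measurable lborel"
  shows "(\<integral>\<^sup>+ s. h s \<partial>distr mu lborel fst) \<le> (\<integral>\<^sup>+ s. h s \<partial>lborel)"
proof -
  have "(\<integral>\<^sup>+ s. h s \<partial>distr mu lborel fst) = (\<integral>\<^sup>+ s. ennreal kappa * h s \<partial>lborel)"
    using assms by (simp add: distr_fst_mu nn_integral_density)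
  also have "\<dots> \<le> (\<integral>\<^sup>+ s. h s \<partial>lborel)"
  proof (rule nn_integral_mono)
    fix s
    have "ennreal kappa * h s \<le> 1 * h s" using kappa_le_1 by (intro mult_right_mono) simp_all
    then show "ennreal kappa * h s \<le> h s" by simp
  qed
  finally show ?thesis .
qed

lemma square_function_le:
  "(\<integral>\<^sup>+ x. (\<integral>\<^sup>+ r \<in> {0<..}. ennreal ((Delta1 mu x r)\<^sup>2 / r) \<partial>lborel) \<partial>mu)
     \<le> ennreal (64 * sin \<alpha> ^ 4)"
proof -
  define G where "G s = (\<integral>\<^sup>+ r. ennreal (kink_weight s r) \<partial>lborel)" for s
  have G_measurable: "G \<in> borel_measurable lborel"
    unfolding G_def using lborel.borel_measurable_nn_integral[OF kink_weight_measurable] by simp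
  have pointwise: "(\<integral>\<^sup>+ r \<in> {0<..}. ennreal ((Delta1 mu x r)\<^sup>2 / r) \<partial>lborel)
      \<le> ennreal (4 * sin \<alpha> ^ 4) * G (fst x)" if "x \<in> Gamma_alpha \<alpha>" for x
  proof -
    have "x = (fst x, f_alpha \<alpha> (fst x))" using that by (simp add: Gamma_alpha_eq prod_eq_iff)
    then show ?thesis using nn_integral_Delta1_sq_le[of "fst x"] unfolding G_def by metis
  qed
  have "(\<integral>\<^sup>+ x. (\<integral>\<^sup>+ r \<in> {0<..}. ennreal ((Delta1 mu x r)\<^sup>2 / r) \<partial>lborel) \<partial>mu)
      \<le> (\<integral>\<^sup>+ x. ennreal (4 * sin \<alpha> ^ 4) * G (fst x) \<partial>mu)"
    by (intro nn_integral_mono_AE AE_I'[OF null_sets_mu_outside_graph]) (use pointwise in auto)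
  also have "\<dots> = ennreal (4 * sin \<alpha> ^ 4) * (\<integral>\<^sup>+ x. G (fst x) \<partial>mu)"
    using measurable_compose[OF measurable_fst_mu G_measurable] by (rule nn_integral_cmult)
  also have "\<dots> = ennreal (4 * sin \<alpha> ^ 4) * (\<integral>\<^sup>+ s. G s \<partial>distr mu lborel fst)"
    using G_measurable by (simp add: nn_integral_distr[OF measurable_fst_mu])
  also have "\<dots> \<le> ennreal (4 * sin \<alpha> ^ 4) * 16"
    using nn_integral_distr_fst_le[OF G_measurable] nn_integral_kink_weight
    by (intro mult_left_mono) (simp_all add: G_def)
  also have "\<dots> = ennreal (64 * sin \<alpha> ^ 4)"
    using ennreal_mult''[of 16 "4 * sin \<alpha> ^ 4"] by (simp add: mult.commute)
  finally show ?thesis .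
qed

end

(* measure_of returns the zero measure when the set function is not a measure. *)

lemma nn_integral_mu_alpha_degenerate:
  assumes "\<not> measure_space UNIV (sets borel) (mu_alpha_setfun \<alpha>)"
  shows "(\<integral>\<^sup>+ x. F x \<partial>mu_alpha \<alpha>) = 0"
proof -
  have "UNIV \<in> null_sets (mu_alpha \<alpha>)"
    using assms by (simp add: null_sets_def sets_mu_alpha emeasure_mu_alpha)
  then have "AE x in mu_alpha \<alpha>. F x = 0" by (rule AE_I') simp
  then show ?thesis by (simp add: nn_integral_cong_AE)
qed

theorem lemma4p2:
  shows "\<exists>C::real. \<forall>\<alpha>::real. 0 < \<alpha> \<and> \<alpha> \<le> pi/4 \<longrightarrow>
     (\<integral>\<^sup>+ x. (\<integral>\<^sup>+ r \<in> {0<..}. ennreal ((Delta1 (mu_alpha \<alpha>) x r)\<^sup>2 / r) \<partial>lborel) \<partial>mu_alpha \<alpha>)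
       \<le> ennreal (C * sin \<alpha> ^ 4)"
proof (intro exI[of _ 64] allI impI)
  fix \<alpha> :: real
  assume \<alpha>: "0 < \<alpha> \<and> \<alpha> \<le> pi/4"
  show "(\<integral>\<^sup>+ x. (\<integral>\<^sup>+ r \<in> {0<..}. ennreal ((Delta1 (mu_alpha \<alpha>) x r)\<^sup>2 / r) \<partial>lborel) \<partial>mu_alpha \<alpha>)
       \<le> ennreal (64 * sin \<alpha> ^ 4)"
  proof (cases "measure_space UNIV (sets borel) (mu_alpha_setfun \<alpha>)")
    case True
    then interpret tent_measure \<alpha> using \<alpha> by unfold_locales auto
    show ?thesis by (rule square_function_le)
  qed (simp add: nn_integral_mu_alpha_degenerate)
qed

end
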